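(* Fix $x \in \mathbf{X}$ and let $(k_0,j_0)$ be the unique pair with $x \in \mathbf{X}_{k_0,j_0}$. Let $\epsilon,\delta \ge 0$. If $H_{TP}(x) \le \delta$ and $H_{WP}(x) \le \epsilon$, then $H_{CIL}(x) \le \epsilon + \delta$.
   Context: Class incremental learning setting. $\mathbf{X}$ is an input domain which is the disjoint union of task domains $\mathbf{X}_1,\dots,\mathbf{X}_T$ ($\mathbf{X}_k\cap\mathbf{X}_{k'}=\emptyset$ for $k\ne k'$), and each $\mathbf{X}_k$ is the disjoint union of class domains $\mathbf{X}_{k,j}$ ($\mathbf{X}_{k,j}\cap\mathbf{X}_{k,j'}=\emptyset$ for $j\neq j'$). $D$ is a fixed conditioning event (the data/trained model), and $\mathbf{P}(x\in A\mid D)$ denotes the probability, under a probability measure conditioned on $D$, of the event that $x$ lies in $A$; $\mathbf{P}(x\in\mathbf{X}_{k,j}\mid x\in\mathbf{X}_k, D)$ is the corresponding conditional probability (within-task prediction, WP), $\mathbf{P}(x\in\mathbf{X}_k\mid D)$ the task-id prediction (TP) probability, and $\mathbf{P}(x\in\mathbf{X}_{k,j}\mid D)$ the class-incremental (CIL) probability. The cross-entropy of distributions $p,q$ is $H(p,q)=-\sum_i p_i\log q_i$. For $x\in\mathbf{X}_{k_0,j_0}$, with one-hot ground-truth labels, define $H_{CIL}(x)=H(y,\{\mathbf{P}(x\in\mathbf{X}_{k,j}\mid D)\}_{k,j})=-\log\mathbf{P}(x\in\mathbf{X}_{k_0,j_0}\mid D)$, $H_{WP}(x)=H(\tilde y,\{\mathbf{P}(x\in\mathbf{X}_{k_0,j}\mid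 x\in\mathbf{X}_{k_0},D)\}_j)=-\log\mathbf{P}(x\in\mathbf{X}_{k_0,j_0}\mid x\in\mathbf{X}_{k_0},D)$, and $H_{TP}(x)=H(\bar y,\{\mathbf{P}(x\in\mathbf{X}_k\mid D)\}_k)=-\log\mathbf{P}(x\in\mathbf{X}_{k_0}\mid D)$, where $y,\tilde y,\bar y$ are the one-hot vectors at $(k_0,j_0)$, $j_0$ (within task $k_0$) and $k_0$ respectively. *)

theory Defs
  imports "HOL-Probability.Probability"
begin

text \<open>Negative logarithm with the convention -log 0 = infinity (cross-entropy against a one-hot label).\<close>
definition neg_log :: "real \<Rightarrow> ereal" where
  "neg_log p = (if p > 0 then ereal (- ln p) else \<infinity>)"

definition cond_prob :: "'a measure \<Rightarrow> 'a set \<Rightarrow> 'a set \<Rightarrow> real" where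
  "cond_prob Q A B = measure Q (A \<inter> B) / measure Q B"

text \<open>Q is the probability measure P(x \<in> _ | D); Xc k j is the class domain X_{k,j},
  Xt k the task domain X_k.  k0, j0 are the true task and class of x.\<close>
definition H_CIL :: "'a measure \<Rightarrow> (nat \<Rightarrow> nat \<Rightarrow> 'a set) \<Rightarrow> nat \<Rightarrow> nat \<Rightarrow> ereal" where
  "H_CIL Q Xc k0 j0 = neg_log (measure Q (Xc k0 j0))"

definition H_WP :: "'a measure \<Rightarrow> (nat \<Rightarrow> nat \<Rightarrow> 'a set) \<Rightarrow> (nat \<Rightarrow> 'a set) \<Rightarrow> nat \<Rightarrow> nat \<Rightarrow> ereal" where
  "H_WP Q Xc Xt k0 j0 = neg_log (cond_prob Q (Xc k0 j0) (Xt k0))"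

definition H_TP :: "'a measure \<Rightarrow> (nat \<Rightarrow> 'a set) \<Rightarrow> nat \<Rightarrow> ereal" where
  "H_TP Q Xt k0 = neg_log (measure Q (Xt k0))"

end

theory Submission
  imports Defs
begin

text \<open>Since a class domain lies inside its task domain, the chain rule gives
  P(X_{k0,j0}) = P(X_{k0,j0} | X_{k0}) P(X_{k0}); the negative logarithm turns this product into
  a sum, so the CIL cross-entropy is exactly the sum of the WP and TP cross-entropies.
  Only the inclusion and P(X_{k0}) > 0 (forced by a finite TP loss) are needed.\<close>

lemma neg_log_mult:
  assumes "a \<ge> 0" "b \<ge> 0"
  shows "neg_log (a * b) = neg_log a + neg_log b"
  using assms by (auto simp: neg_log_def ln_mult zero_less_mult_iff)

lemma neg_log_le_ereal_imp_pos: "neg_log p \<le> ereal r \<Longrightarrow> p > 0"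
  by (auto simp: neg_log_def split: if_splits)

lemma cond_prob_nonneg: "cond_prob Q A B \<ge> 0"
  by (simp add: cond_prob_def)

lemma measure_eq_cond_prob_mult:
  assumes "A \<subseteq> B" "measure Q B \<noteq> 0"
  shows "measure Q A = cond_prob Q A B * measure Q B"
  using assms by (simp add: cond_prob_def Int_absorb2)

lemma H_CIL_eq_H_WP_plus_H_TP:
  assumes "Xc k0 j0 \<subseteq> Xt k0" "measure Q (Xt k0) \<noteq> 0"
  shows "H_CIL Q Xc k0 j0 = H_WP Q Xc Xt k0 j0 + H_TP Q Xt k0"
  unfolding H_CIL_def H_WP_def H_TP_def
  by (simp add: measure_eq_cond_prob_mult[OF assms] neg_log_mult cond_prob_nonneg)

theorem theorem1:
  fixes Q :: "'a measure"
    and X :: "'a set"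
    and Xt :: "nat \<Rightarrow> 'a set"
    and Xc :: "nat \<Rightarrow> nat \<Rightarrow> 'a set"
    and Tasks :: "nat set"
    and Cls :: "nat \<Rightarrow> nat set"
    and x :: 'a and k0 j0 :: nat
    and \<epsilon> \<delta> :: real
  assumes Q: "prob_space Q" and spaceQ: "space Q = X"
    and meas: "\<And>k j. k \<in> Tasks \<Longrightarrow> j \<in> Cls k \<Longrightarrow> Xc k j \<in> sets Q"
    and X_union: "X = (\<Union>k\<in>Tasks. Xt k)"
    and Xt_union: "\<And>k. k \<in> Tasks \<Longrightarrow> Xt k = (\<Union>j\<in>Cls k. Xc k j)"
    and Xt_disj: "\<And>k k'. k \<in> Tasks \<Longrightarrow> k' \<in> Tasks \<Longrightarrow> k \<noteq> k' \<Longrightarrow> Xt k \<inter> Xt k' = {}"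
    and Xc_disj: "\<And>k j j'. k \<in> Tasks \<Longrightarrow> j \<in> Cls k \<Longrightarrow> j' \<in> Cls k \<Longrightarrow> j \<noteq> j' \<Longrightarrow> Xc k j \<inter> Xc k j' = {}"
    and x_in: "k0 \<in> Tasks" "j0 \<in> Cls k0" "x \<in> Xc k0 j0"
    and eps: "\<epsilon> \<ge> 0" and del: "\<delta> \<ge> 0"
    and TP: "H_TP Q Xt k0 \<le> ereal \<delta>"
    and WP: "H_WP Q Xc Xt k0 j0 \<le> ereal \<epsilon>"
  shows "H_CIL Q Xc k0 j0 \<le> ereal (\<epsilon> + \<delta>)"
proof -
  have class_in_task: "Xc k0 j0 \<subseteq> Xt k0"
    using Xt_union[OF x_in(1)] x_in(2) by blast
  have "measure Q (Xt k0) \<noteq> 0"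
    using TP neg_log_le_ereal_imp_pos unfolding H_TP_def by force
  then have "H_CIL Q Xc k0 j0 = H_WP Q Xc Xt k0 j0 + H_TP Q Xt k0"
    using H_CIL_eq_H_WP_plus_H_TP class_in_task by blast
  also have "\<dots> \<le> ereal \<epsilon> + ereal \<delta>"
    using WP TP by (rule add_mono)
  finally show ?thesis
    by simp
qed

end
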